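(* Let $n\ge 1$, let $\mathbf r\in\mathbb{R}^n$ have all entries negative, let $\lambda>0$, let $\mathbf R = \operatorname{diag}(\exp(-\mathbf r/\lambda))$, let $\mathbf P$ be an $n\times n$ row-stochastic matrix, let $\tilde{\mathbf P} = (\mathbf P+\mathbf P^\top)/2$, and assume $\mathbf R - \tilde{\mathbf P}$ is invertible. Fix an index $s_T\in\{1,\dots,n\}$ (corresponding to a terminal state). Consider the problem $$\min_{\mathbf v\in\mathbb{R}^n} \exp(\mathbf v)^\top(\mathbf R - \tilde{\mathbf P})\exp(\mathbf v) \quad\text{subject to}\quad v(s_T) = 0 .$$ If $\mathbf v^*$ is a minimizer of this problem, then there is a scalar $\alpha\in\mathbb{R}$ such that $$\exp(\mathbf v^* ) = \alpha\,(\mathbf R - \tilde{\mathbf P})^{-1}\mathbf b_{s_T},$$ i.e., $\mathbf v^*$ is the entrywise logarithm of a scalar multiple of the column of the symmetrized default representation $(\mathbf R - \tilde{\mathbf P})^{-1}$ corresponding to $s_T$.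
   Context: $\exp$, $\log$ and $\operatorname{diag}$ act entrywise; $\mathbf b_{s_T}$ is the standard basis vector with a $1$ in entry $s_T$. The matrix $(\mathbf R - \tilde{\mathbf P})^{-1}$ is called the (symmetrized) default representation (DR), where $\mathbf r$ is the vector of state rewards and $\mathbf P$ the transition matrix induced by a default policy. *)

theory Defs
  imports "HOL-Analysis.Analysis"
begin

definition diag_mat :: "real ^ 'n \<Rightarrow> real ^ 'n ^ 'n" where
  "diag_mat d = (\<chi> i j. if i = j then d $ i else 0)"

definition vexp :: "real ^ 'n \<Rightarrow> real ^ 'n" where
  "vexp v = (\<chi> i. exp (v $ i))"

definition row_stochastic :: "real ^ 'n ^ 'n \<Rightarrow> bool" where
  "row_stochastic P \<longleftrightarrow> (\<forall>i j. 0 \<le> P $ i $ j) \<and> (\<forall>i. (\<Sum>j\<in>UNIV. P $ i $ j) = 1)"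

end

theory Submission
  imports Defs
begin

text \<open>
  With \<open>M = R - (P + P\<^sup>T)/2\<close> symmetric and \<open>x = exp v\<^sup>*\<close>, the substitution \<open>y = exp v\<close> turns the problem
  into minimising the quadratic form \<open>y\<^sup>T M y\<close> over the open set of positive vectors with
  \<open>y(s\<^sub>T) = 1\<close>. Moving \<open>x\<close> along a coordinate \<open>i \<noteq> s\<^sub>T\<close> keeps it feasible, so the
  first-order condition gives \<open>(M x)(i) = 0\<close>. Hence \<open>M x\<close> is a multiple of \<open>b\<^sub>s\<^sub>T\<close>, and
  inverting \<open>M\<close> gives the claim. The sign of \<open>r\<close>, the value of \<open>\<lambda>\<close> and the stochasticity of
  \<open>P\<close> play no role.
\<close>

lemma matrix_inv_left:
  fixes A :: "'a::semiring_1^'n^'m"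
  assumes "invertible A"
  shows "matrix_inv A ** A = mat 1"
  using someI_ex[OF assms[unfolded invertible_def]] unfolding matrix_inv_def by blast

lemma eq_matrix_inv_mult_vec_if_mult_vec_eq:
  fixes A :: "'a::comm_semiring_1^'n^'m"
  assumes "invertible A" and "A *v x = y"
  shows "x = matrix_inv A *v y"
  using assms by (metis matrix_inv_left matrix_vector_mul_assoc matrix_vector_mul_lid)

lemma quadratic_form_add_scaleR:
  fixes M :: "real^'n^'n"
  assumes "transpose M = M"
  shows "(x + s *\<^sub>R u) \<bullet> (M *v (x + s *\<^sub>R u))
    = x \<bullet> (M *v x) + 2 * s * (u \<bullet> (M *v x)) + s\<^sup>2 * (u \<bullet> (M *v u))"
proof -
  have "x \<bullet> (M *v u) = u \<bullet> (M *v x)"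
    by (metis assms dot_lmul_matrix inner_commute vector_transpose_matrix)
  then show ?thesis
    by (simp add: matrix_vector_right_distrib matrix_vector_mult_scaleR inner_add_left
        inner_add_right power2_eq_square algebra_simps)
qed

lemma linear_coeff_eq_0_if_local_min:
  fixes a b c :: real
  assumes "c > 0" and "\<forall>s. \<bar>s\<bar> < c \<longrightarrow> 0 \<le> 2 * s * a + s\<^sup>2 * b"
  shows "a = 0"
proof -
  have "((\<lambda>s. 2 * s * a + s\<^sup>2 * b) has_real_derivative 2 * a) (at 0)"
    by (auto intro!: derivative_eq_intros)
  then have "2 * a = 0"
    by (rule DERIV_local_min) (use assms in auto)
  then show ?thesis by simp
qed

lemma mult_vec_eq_axis_if_constrained_min:
  fixes M :: "real^'n^'n" and x :: "real^'n"
  assumes sym: "transpose M = M"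
    and pos: "\<forall>j. 0 < x $ j"
    and min: "\<forall>y. (\<forall>j. 0 < y $ j) \<longrightarrow> y $ k = x $ k \<longrightarrow> x \<bullet> (M *v x) \<le> y \<bullet> (M *v y)"
  shows "M *v x = (M *v x) $ k *\<^sub>R axis k 1"
proof -
  have "(M *v x) $ i = 0" if "i \<noteq> k" for i
  proof (rule linear_coeff_eq_0_if_local_min)
    show "x $ i > 0" using pos by blast
    show "\<forall>s. \<bar>s\<bar> < x $ i \<longrightarrow> 0 \<le> 2 * s * (M *v x) $ i + s\<^sup>2 * (axis i 1 \<bullet> (M *v axis i 1))"
    proof (intro allI impI)
      fix s :: real
      assume "\<bar>s\<bar> < x $ i"
      then have "x \<bullet> (M *v x) \<le> (x + s *\<^sub>R axis i 1) \<bullet> (M *v (x + s *\<^sub>R axis i 1))"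
        using pos \<open>i \<noteq> k\<close> by (intro min[rule_format]) (auto simp: axis_def)
      then show "0 \<le> 2 * s * (M *v x) $ i + s\<^sup>2 * (axis i 1 \<bullet> (M *v axis i 1))"
        by (simp add: quadratic_form_add_scaleR[OF sym] inner_axis')
    qed
  qed
  then show ?thesis
    by (auto simp: vec_eq_iff axis_def)
qed

lemma range_vexp: "range vexp = {y. \<forall>j. 0 < y $ j}"
proof (intro equalityI subsetI)
  fix y :: "real^'n"
  assume "y \<in> {y. \<forall>j. 0 < y $ j}"
  then have "y = vexp (\<chi> j. ln (y $ j))"
    by (simp add: vexp_def vec_eq_iff)
  then show "y \<in> range vexp" by blast
qed (auto simp: vexp_def)

theorem proposition3p10:
  fixes r :: "real ^ 'n" and lam :: real and P :: "real ^ 'n ^ 'n"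
    and sT :: 'n and vstar :: "real ^ 'n"
  assumes r_neg: "\<forall>i. r $ i < 0"
    and lam_pos: "lam > 0"
    and P_stoch: "row_stochastic P"
    and inv: "invertible (diag_mat (\<chi> i. exp (- r $ i / lam)) - (1/2) *\<^sub>R (P + transpose P))"
    and feas: "vstar $ sT = 0"
    and opt: "\<forall>v. v $ sT = 0 \<longrightarrow>
        vexp vstar \<bullet> ((diag_mat (\<chi> i. exp (- r $ i / lam)) - (1/2) *\<^sub>R (P + transpose P)) *v vexp vstar)
        \<le> vexp v \<bullet> ((diag_mat (\<chi> i. exp (- r $ i / lam)) - (1/2) *\<^sub>R (P + transpose P)) *v vexp v)"
  shows "\<exists>\<alpha>::real. vexp vstar =
    \<alpha> *\<^sub>R (matrix_inv (diag_mat (\<chi> i. exp (- r $ i / lam)) - (1/2) *\<^sub>R (P + transpose P)) *v axis sT 1)"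
proof -
  define M where "M = diag_mat (\<chi> i. exp (- r $ i / lam)) - (1/2) *\<^sub>R (P + transpose P)"
  define x where "x = vexp vstar"
  have sym: "transpose M = M"
    by (simp add: M_def transpose_def diag_mat_def vec_eq_iff)
  have pos: "\<forall>j. 0 < x $ j" and x_sT: "x $ sT = 1"
    by (simp_all add: x_def vexp_def feas)
  have opt_M: "\<forall>v. v $ sT = 0 \<longrightarrow> x \<bullet> (M *v x) \<le> vexp v \<bullet> (M *v vexp v)"
    using opt unfolding M_def x_def .
  have "x \<bullet> (M *v x) \<le> y \<bullet> (M *v y)" if "\<forall>j. 0 < y $ j" and "y $ sT = x $ sT" for y
  proof -
    have "y \<in> range vexp"
      using that(1) by (simp add: range_vexp)
    then obtain v where y: "y = vexp v" by blast
    with that(2) x_sT have "v $ sT = 0"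
      by (simp add: vexp_def)
    with opt_M show ?thesis
      unfolding y by blast
  qed
  then have "M *v x = (M *v x) $ sT *\<^sub>R axis sT 1"
    by (intro mult_vec_eq_axis_if_constrained_min sym pos allI impI)
  then have "x = matrix_inv M *v ((M *v x) $ sT *\<^sub>R axis sT 1)"
    by (rule eq_matrix_inv_mult_vec_if_mult_vec_eq[OF inv[folded M_def]])
  then have "x = (M *v x) $ sT *\<^sub>R (matrix_inv M *v axis sT 1)"
    by (simp only: matrix_vector_mult_scaleR)
  then show ?thesis
    unfolding M_def x_def by (rule exI)
qed

end
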